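(* For all positive integers $a,b$, the Aztec rectangle $\mathcal{AR}_{a,b}$ (with no defects) has a cover by L-trominoes if and only if $a(b+1)+b(a+1)\equiv 0 \pmod 3$.
   Context: A cell is a unit square $[i,i+1]\times[j,j+1]$ with $i,j\in\mathbb{Z}$, labelled by its coordinate $(i,j)$. A region is a finite set of cells whose union is connected (cells sharing an edge are adjacent). An L-tromino is a set of three cells equal to a $2\times 2$ block of cells with one cell removed, i.e. a translate of one of $\{(0,0),(1,0),(0,1)\}$, $\{(0,0),(1,0),(1,1)\}$, $\{(0,0),(0,1),(1,1)\}$, $\{(1,0),(0,1),(1,1)\}$. Some cells of a region may be designated as defects. A cover (tiling) of a region $R$ with defect set $D\subseteq R$ is a set of pairwise disjoint L-trominoes, each contained in $R\setminus D$, whose union is exactly $R\setminus D$. For positive integers $a,b$, the Aztec rectangle $\mathcal{AR}_{a,b}$ is (up to translation) the region consisting of the cells $(i,j)\in\mathbb{Z}^2$ with $0\le i+j\le 2b$ and $1\le j-i\le 2a+1$; it has $a$ cells along its southwestern side, $b$ cells along its northwestern side, and $a(b+1)+b(a+1)$ cells in total. *)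

theory Defs
  imports Main
begin

type_synonym cell = "int \<times> int"

definition shift :: "cell \<Rightarrow> cell set \<Rightarrow> cell set" where
  "shift v S = (\<lambda>(i,j). (i + fst v, j + snd v)) ` S"

definition L_shapes :: "cell set set" where
  "L_shapes = {{(0,0),(1,0),(0,1)}, {(0,0),(1,0),(1,1)},
               {(0,0),(0,1),(1,1)}, {(1,0),(0,1),(1,1)}}"

definition is_L_tromino :: "cell set \<Rightarrow> bool" where
  "is_L_tromino T \<longleftrightarrow> (\<exists>v. \<exists>S\<in>L_shapes. T = shift v S)"

definition is_cover :: "cell set set \<Rightarrow> cell set \<Rightarrow> cell set \<Rightarrow> bool" where
  "is_cover C R D \<longleftrightarrow>
     (\<forall>T\<in>C. is_L_tromino T \<and> T \<subseteq> R - D) \<and>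
     (\<forall>T\<in>C. \<forall>T'\<in>C. T \<noteq> T' \<longrightarrow> T \<inter> T' = {}) \<and>
     \<Union>C = R - D"

definition tileable :: "cell set \<Rightarrow> cell set \<Rightarrow> bool" where
  "tileable R D \<longleftrightarrow> (\<exists>C. is_cover C R D)"

definition aztec_rectangle :: "nat \<Rightarrow> nat \<Rightarrow> cell set" where
  "aztec_rectangle a b =
     {(i,j). 0 \<le> i + j \<and> i + j \<le> 2 * int b \<and> 1 \<le> j - i \<and> j - i \<le> 2 * int a + 1}"

end

theory Submission
  imports Defs
begin

text \<open>
  Every tromino covers three cells, so a tileable Aztec rectangle has area
  \<open>a(b+1) + b(a+1) = 2ab + a + b\<close> divisible by 3, which happens exactly when
  \<open>a \<equiv> b \<equiv> 0\<close> or \<open>a \<equiv> b \<equiv> 2 (mod 3)\<close>.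
  Conversely, \<open>AR(2,2)\<close> and \<open>AR(3,3)\<close> are tiled by hand, and \<open>AR(a+3,b)\<close> is
  \<open>AR(a,b)\<close> together with a strip of width three along its northwestern side,
  which is tiled by a zigzag of trominoes. The reflection \<open>(i,j) \<mapsto> (-i-1,j)\<close>
  maps \<open>AR(b,a)\<close> onto \<open>AR(a,b)\<close> and trominoes to trominoes, so both sides can
  be grown by multiples of 3.
\<close>

text \<open>The four orientations, named after the cell of the block \<open>{x,x+1} \<times> {y,y+1}\<close> they omit.\<close>

definition L_no_NE :: "int \<Rightarrow> int \<Rightarrow> cell set" where
  "L_no_NE x y = {(x,y), (x+1,y), (x,y+1)}"

definition L_no_NW :: "int \<Rightarrow> int \<Rightarrow> cell set" where
  "L_no_NW x y = {(x,y), (x+1,y), (x+1,y+1)}"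

definition L_no_SE :: "int \<Rightarrow> int \<Rightarrow> cell set" where
  "L_no_SE x y = {(x,y), (x,y+1), (x+1,y+1)}"

definition L_no_SW :: "int \<Rightarrow> int \<Rightarrow> cell set" where
  "L_no_SW x y = {(x+1,y), (x,y+1), (x+1,y+1)}"

lemmas L_defs = L_no_NE_def L_no_NW_def L_no_SE_def L_no_SW_def

lemma is_L_tromino_iff:
  "is_L_tromino T \<longleftrightarrow>
     (\<exists>x y. T = L_no_NE x y \<or> T = L_no_NW x y \<or> T = L_no_SE x y \<or> T = L_no_SW x y)"
  unfolding is_L_tromino_def L_shapes_def by (auto simp: shift_def L_defs add.commute)

lemma is_L_tromino_L:
  "is_L_tromino (L_no_NE x y)" "is_L_tromino (L_no_NW x y)"
  "is_L_tromino (L_no_SE x y)" "is_L_tromino (L_no_SW x y)"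
  unfolding is_L_tromino_iff by blast+

lemma card_L_tromino: "is_L_tromino T \<Longrightarrow> card T = 3"
  unfolding is_L_tromino_iff by (auto simp: L_defs)

lemma tileable_L_tromino: "is_L_tromino T \<Longrightarrow> tileable T {}"
  unfolding tileable_def is_cover_def by (rule exI[of _ "{T}"]) auto

lemma tileable_Un:
  assumes "tileable R1 {}" "tileable R2 {}" "R1 \<inter> R2 = {}"
  shows "tileable (R1 \<union> R2) {}"
proof -
  obtain C1 where C1: "\<forall>T\<in>C1. is_L_tromino T \<and> T \<subseteq> R1"
      "\<forall>T\<in>C1. \<forall>T'\<in>C1. T \<noteq> T' \<longrightarrow> T \<inter> T' = {}" "\<Union>C1 = R1"
    using assms(1) unfolding tileable_def is_cover_def by auto
  obtain C2 where C2: "\<forall>T\<in>C2. is_L_tromino T \<and> T \<subseteq> R2"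
      "\<forall>T\<in>C2. \<forall>T'\<in>C2. T \<noteq> T' \<longrightarrow> T \<inter> T' = {}" "\<Union>C2 = R2"
    using assms(2) unfolding tileable_def is_cover_def by auto
  have "\<forall>T\<in>C1 \<union> C2. is_L_tromino T \<and> T \<subseteq> R1 \<union> R2" using C1(1) C2(1) by blast
  moreover have "T \<inter> T' = {}" if "T \<in> C1 \<union> C2" "T' \<in> C1 \<union> C2" "T \<noteq> T'" for T T'
  proof -
    have "A \<inter> B = {}" if "A \<in> C1" "B \<in> C2" for A B
      using that C1(1) C2(1) assms(3) by blast
    with \<open>T \<in> C1 \<union> C2\<close> \<open>T' \<in> C1 \<union> C2\<close> \<open>T \<noteq> T'\<close> C1(2) C2(2) show ?thesis
      by (metis Int_commute UnE)
  qed
  moreover have "\<Union>(C1 \<union> C2) = R1 \<union> R2" using C1(3) C2(3) by blast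
  ultimately have "is_cover (C1 \<union> C2) (R1 \<union> R2) {}"
    unfolding is_cover_def by simp
  then show ?thesis unfolding tileable_def by blast
qed

lemma tileable_image:
  assumes "inj f" and L: "\<And>T. is_L_tromino T \<Longrightarrow> is_L_tromino (f ` T)" and "tileable R {}"
  shows "tileable (f ` R) {}"
proof -
  obtain C where C: "\<forall>T\<in>C. is_L_tromino T \<and> T \<subseteq> R"
      "\<forall>T\<in>C. \<forall>T'\<in>C. T \<noteq> T' \<longrightarrow> T \<inter> T' = {}" "\<Union>C = R"
    using assms(3) unfolding tileable_def is_cover_def by auto
  have "\<forall>T\<in>image f ` C. is_L_tromino T \<and> T \<subseteq> f ` R" using C(1) L by blast
  moreover have "f ` T \<inter> f ` T' = {}" if "T \<in> C" "T' \<in> C" "f ` T \<noteq> f ` T'" for T T'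
    using C(2) that by (metis image_Int[OF \<open>inj f\<close>] image_empty)
  moreover have "\<Union>(image f ` C) = f ` R" using C(3) by blast
  ultimately have "is_cover (image f ` C) (f ` R) {}"
    unfolding is_cover_def by auto
  then show ?thesis unfolding tileable_def by blast
qed

lemma tileable_imp_3_dvd_card:
  assumes "finite R" and "tileable R {}"
  shows "3 dvd card R"
proof -
  obtain C where C: "\<forall>T\<in>C. is_L_tromino T \<and> T \<subseteq> R"
      "\<forall>T\<in>C. \<forall>T'\<in>C. T \<noteq> T' \<longrightarrow> T \<inter> T' = {}" "\<Union>C = R"
    using assms(2) unfolding tileable_def is_cover_def by auto
  have "finite C" using C(1) \<open>finite R\<close> by (meson PowI finite_Pow_iff finite_subset subsetI)
  have "card R = card (\<Union>C)" using C(3) by simp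
  also have "\<dots> = (\<Sum>T\<in>C. card T)"
    using C \<open>finite R\<close> by (intro card_Union_disjoint) (auto simp: pairwise_def disjnt_def finite_subset)
  also have "\<dots> = 3 * card C" using C(1) by (simp add: card_L_tromino)
  finally show ?thesis by simp
qed

text \<open>
  A cell \<open>(i,j)\<close> of \<open>AR(a,b)\<close> is determined by \<open>j - i\<close> and \<open>i + j\<close>, which have the same
  parity; the even cells form an \<open>a \<times> (b+1)\<close> grid and the odd ones an \<open>(a+1) \<times> b\<close> grid.
\<close>

lemma aztec_rectangle_eq_Un:
  "aztec_rectangle a b =
     (\<lambda>(r,q). (q-r-1, q+r+1)) ` ({0..<int a} \<times> {0..int b}) \<union>
     (\<lambda>(r,q). (q-r, q+r+1)) ` ({0..int a} \<times> {0..<int b})"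
  (is "_ = ?E ` ?A \<union> ?O ` ?B")
proof (intro equalityI subsetI)
  fix p assume "p \<in> aztec_rectangle a b"
  then obtain i j where p: "p = (i,j)"
    and h: "0 \<le> i + j" "i + j \<le> 2 * int b" "1 \<le> j - i" "j - i \<le> 2 * int a + 1"
    by (auto simp: aztec_rectangle_def)
  show "p \<in> ?E ` ?A \<union> ?O ` ?B"
  proof (cases "even (j - i)")
    case True
    then obtain r q where "j - i = 2*r" "i + j = 2*q"
      by (metis dvd_def even_add even_diff)
    then have "p = ?E (r-1, q)" "(r-1, q) \<in> ?A" using h by (auto simp: p)
    then show ?thesis by blast
  next
    case False
    then obtain r q where "j - i = 2*r + 1" "i + j = 2*q + 1"
      by (metis oddE even_add even_diff)
    then have "p = ?O (r, q)" "(r, q) \<in> ?B" using h by (auto simp: p)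
    then show ?thesis by blast
  qed
qed (auto simp: aztec_rectangle_def)

lemma finite_aztec_rectangle: "finite (aztec_rectangle a b)"
  unfolding aztec_rectangle_eq_Un by simp

lemma card_aztec_rectangle: "card (aztec_rectangle a b) = a * (b + 1) + b * (a + 1)"
proof -
  let ?E = "\<lambda>(r,q). (q-r-1, q+r+1) :: cell" and ?O = "\<lambda>(r,q). (q-r, q+r+1) :: cell"
  let ?A = "{0..<int a} \<times> {0..int b}" and ?B = "{0..int a} \<times> {0..<int b}"
  have "inj ?E" "inj ?O" by (auto simp: inj_def)
  have "?E x \<noteq> ?O y" for x y
    by (cases x; cases y; simp; presburger)
  then have "?E ` ?A \<inter> ?O ` ?B = {}" by blast
  then have "card (aztec_rectangle a b) = card (?E ` ?A) + card (?O ` ?B)"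
    unfolding aztec_rectangle_eq_Un by (intro card_Un_disjoint) auto
  also have "\<dots> = card ?A + card ?B"
    using \<open>inj ?E\<close> \<open>inj ?O\<close> by (simp add: card_image inj_on_subset)
  also have "\<dots> = a * (b + 1) + b * (a + 1)"
    by (simp add: card_cartesian_product nat_add_distrib)
  finally show ?thesis .
qed

lemma aztec_area_mod_3:
  "((a::nat) * (b + 1) + b * (a + 1)) mod 3 = 0 \<longleftrightarrow>
     a mod 3 = 0 \<and> b mod 3 = 0 \<or> a mod 3 = 2 \<and> b mod 3 = 2"
proof -
  have residues: "(r * (s + 1) + s * (r + 1)) mod 3 = 0 \<longleftrightarrow> r = 0 \<and> s = 0 \<or> r = 2 \<and> s = 2"
    if "r \<in> {0, 1, 2}" "s \<in> {0, 1, 2}" for r s :: nat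
    using that by (elim insertE emptyE; simp)
  have "(a * (b + 1) + b * (a + 1)) mod 3 =
      ((a mod 3) * (b mod 3 + 1) + (b mod 3) * (a mod 3 + 1)) mod 3"
    by (intro mod_add_cong mod_mult_cong) simp_all
  also have "\<dots> = 0 \<longleftrightarrow> a mod 3 = 0 \<and> b mod 3 = 0 \<or> a mod 3 = 2 \<and> b mod 3 = 2"
    by (rule residues) auto
  finally show ?thesis .
qed

definition reflect :: "cell \<Rightarrow> cell" where
  "reflect p = (- fst p - 1, snd p)"

lemma reflect_reflect [simp]: "reflect (reflect p) = p"
  by (simp add: reflect_def)

lemma is_L_tromino_reflect:
  assumes "is_L_tromino T"
  shows "is_L_tromino (reflect ` T)"
proof -
  have images: "reflect ` L_no_NE x y = L_no_NW (-x-2) y" "reflect ` L_no_NW x y = L_no_NE (-x-2) y"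
       "reflect ` L_no_SE x y = L_no_SW (-x-2) y" "reflect ` L_no_SW x y = L_no_SE (-x-2) y" for x y
    by (auto simp: reflect_def L_defs)
  obtain x y where "T = L_no_NE x y \<or> T = L_no_NW x y \<or> T = L_no_SE x y \<or> T = L_no_SW x y"
    using assms is_L_tromino_iff by blast
  then show ?thesis by (elim disjE) (simp_all only: images is_L_tromino_L)
qed

lemma reflect_aztec_rectangle: "reflect ` aztec_rectangle b a = aztec_rectangle a b"
proof -
  have *: "reflect p \<in> aztec_rectangle b a \<longleftrightarrow> p \<in> aztec_rectangle a b" for p
    by (auto simp: reflect_def aztec_rectangle_def)
  show ?thesis
  proof (intro equalityI subsetI)
    fix p assume "p \<in> reflect ` aztec_rectangle b a"
    then show "p \<in> aztec_rectangle a b" by (metis * imageE reflect_reflect)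
  next
    fix p assume "p \<in> aztec_rectangle a b"
    then show "p \<in> reflect ` aztec_rectangle b a" by (metis * image_eqI reflect_reflect)
  qed
qed

lemma tileable_aztec_rectangle_swap:
  assumes "tileable (aztec_rectangle b a) {}"
  shows "tileable (aztec_rectangle a b) {}"
proof -
  have "inj reflect" by (rule inj_on_inverseI[of _ reflect]) simp
  from tileable_image[OF this is_L_tromino_reflect assms]
  show ?thesis by (simp only: reflect_aztec_rectangle)
qed

definition aztec_strip :: "nat \<Rightarrow> int \<Rightarrow> cell set" where
  "aztec_strip n k = {(i,j). 0 \<le> i + j \<and> i + j \<le> 2 * int n \<and> 2 * k \<le> j - i \<and> j - i \<le> 2 * k + 5}"

lemma aztec_rectangle_add_3:
  "aztec_rectangle (a + 3) b = aztec_rectangle a b \<union> aztec_strip b (int a + 1)"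
  unfolding aztec_rectangle_def aztec_strip_def by (rule set_eqI) (clarsimp, presburger)

lemma aztec_rectangle_Int_strip: "aztec_rectangle a b \<inter> aztec_strip b (int a + 1) = {}"
  unfolding aztec_rectangle_def aztec_strip_def by auto

lemma aztec_strip_1:
  "aztec_strip 1 k = L_no_SE (-2-k) (2+k) \<union> L_no_SE (-1-k) (1+k) \<union> L_no_SE (-k) k"
proof (intro equalityI subsetI)
  fix p assume "p \<in> aztec_strip 1 k"
  then obtain i j where p: "p = (i,j)" and h: "0 \<le> i+j" "i+j \<le> 2" "2*k \<le> j-i" "j-i \<le> 2*k+5"
    by (auto simp: aztec_strip_def)
  define u v where "u = i + k" and "v = j - k"
  have "i = u - k" "j = v + k" by (simp_all add: u_def v_def)
  moreover have uv: "0 \<le> u+v" "u+v \<le> 2" "0 \<le> v-u" "v-u \<le> 5" using h by (simp_all add: u_def v_def)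
  moreover have "u \<in> set [-3..1]" "v \<in> set [0..4]" using uv by (auto simp only: set_upto atLeastAtMost_iff)
  ultimately show "p \<in> L_no_SE (-2-k) (2+k) \<union> L_no_SE (-1-k) (1+k) \<union> L_no_SE (-k) k"
    unfolding p by (simp add: upto.simps; elim disjE; simp add: L_defs)
qed (auto simp: aztec_strip_def L_defs)

lemma aztec_strip_Suc:
  "aztec_strip (Suc n) k =
     aztec_strip n k \<union> (L_no_NE (int n - k) (int n + k + 1) \<union> L_no_SW (int n - k - 2) (int n + k + 2))"
proof (intro equalityI subsetI)
  fix p assume "p \<in> aztec_strip (Suc n) k"
  then obtain i j where p: "p = (i,j)"
    and h: "0 \<le> i+j" "i+j \<le> 2*int n + 2" "2*k \<le> j-i" "j-i \<le> 2*k+5"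
    by (auto simp: aztec_strip_def)
  show "p \<in> aztec_strip n k \<union> (L_no_NE (int n - k) (int n + k + 1) \<union> L_no_SW (int n - k - 2) (int n + k + 2))"
  proof (cases "i + j \<le> 2 * int n")
    case True
    then show ?thesis using h by (simp add: p aztec_strip_def)
  next
    case False
    define u v where "u = i + k - int n" and "v = j - k - int n"
    have "i = u - k + int n" "j = v + k + int n" by (simp_all add: u_def v_def)
    moreover have uv: "1 \<le> u+v" "u+v \<le> 2" "0 \<le> v-u" "v-u \<le> 5"
      using h False by (simp_all add: u_def v_def)
    moreover have "u \<in> set [-2..1]" "v \<in> set [1..4]" using uv by (auto simp only: set_upto atLeastAtMost_iff)
    ultimately show ?thesis
      unfolding p by (simp add: upto.simps; elim disjE; simp add: L_defs)
  qed
qed (auto simp: aztec_strip_def L_defs)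

lemma tileable_aztec_strip: "n \<ge> 1 \<Longrightarrow> tileable (aztec_strip n k) {}"
proof (induction n rule: nat_induct_at_least)
  case base
  show ?case unfolding aztec_strip_1
    by (intro tileable_Un tileable_L_tromino is_L_tromino_L; auto simp: L_defs)
next
  case (Suc n)
  show ?case unfolding aztec_strip_Suc
    by (intro tileable_Un Suc.IH tileable_L_tromino is_L_tromino_L; auto simp: L_defs aztec_strip_def)
qed

lemma tileable_aztec_rectangle_add_mult_3_left:
  assumes "b > 0" and "tileable (aztec_rectangle a b) {}"
  shows "tileable (aztec_rectangle (a + 3 * m) b) {}"
proof (induction m)
  case (Suc m)
  then have "tileable (aztec_rectangle (a + 3 * m + 3) b) {}"
    unfolding aztec_rectangle_add_3 using \<open>b > 0\<close>
    by (intro tileable_Un tileable_aztec_strip aztec_rectangle_Int_strip) simp_all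
  then show ?case by (simp add: ac_simps)
qed (simp add: assms(2))

lemma tileable_aztec_rectangle_add_mult_3:
  assumes "a > 0" "b > 0" and "tileable (aztec_rectangle a b) {}"
  shows "tileable (aztec_rectangle (a + 3 * m) (b + 3 * n)) {}"
  using assms
  by (meson tileable_aztec_rectangle_add_mult_3_left tileable_aztec_rectangle_swap add_gr_0)

lemma tileable_aztec_rectangle_2_2: "tileable (aztec_rectangle 2 2) {}"
proof -
  have "aztec_rectangle 2 2 = L_no_NE (-2) 2 \<union> L_no_NW (-1) 1 \<union> L_no_SE (-1) 3 \<union> L_no_SW 0 2"
  proof (intro equalityI subsetI)
    fix p assume "p \<in> aztec_rectangle 2 2"
    then obtain i j where p: "p = (i,j)" and h: "0 \<le> i + j" "i + j \<le> 4" "1 \<le> j - i" "j - i \<le> 5"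
      by (auto simp: aztec_rectangle_def)
    have "i \<in> set [-2..2]" "j \<in> set [0..4]" using h by (auto simp only: set_upto atLeastAtMost_iff)
    then show "p \<in> L_no_NE (-2) 2 \<union> L_no_NW (-1) 1 \<union> L_no_SE (-1) 3 \<union> L_no_SW 0 2"
      using h unfolding p by (simp add: upto.simps L_defs; elim disjE; simp)
  qed (auto simp: aztec_rectangle_def L_defs)
  then show ?thesis
    by (simp only:) (intro tileable_Un tileable_L_tromino is_L_tromino_L; auto simp: L_defs)
qed

lemma tileable_aztec_rectangle_3_3: "tileable (aztec_rectangle 3 3) {}"
proof -
  have "aztec_rectangle 3 3 =
      L_no_NE (-3) 3 \<union> L_no_NW (-2) 2 \<union> L_no_NE (-2) 4 \<union> L_no_NW (-1) 1 \<union>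
      L_no_SE (-1) 5 \<union> L_no_SW 0 2 \<union> L_no_SE 0 4 \<union> L_no_SW 1 3"
  proof (intro equalityI subsetI)
    fix p assume "p \<in> aztec_rectangle 3 3"
    then obtain i j where p: "p = (i,j)" and h: "0 \<le> i + j" "i + j \<le> 6" "1 \<le> j - i" "j - i \<le> 7"
      by (auto simp: aztec_rectangle_def)
    have "i \<in> set [-3..3]" "j \<in> set [0..6]" using h by (auto simp only: set_upto atLeastAtMost_iff)
    then show "p \<in> L_no_NE (-3) 3 \<union> L_no_NW (-2) 2 \<union> L_no_NE (-2) 4 \<union> L_no_NW (-1) 1 \<union>
      L_no_SE (-1) 5 \<union> L_no_SW 0 2 \<union> L_no_SE 0 4 \<union> L_no_SW 1 3"
      using h unfolding p by (simp add: upto.simps L_defs; elim disjE; simp)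
  qed (auto simp: aztec_rectangle_def L_defs)
  then show ?thesis
    by (simp only:) (intro tileable_Un tileable_L_tromino is_L_tromino_L; auto simp: L_defs)
qed

theorem theorem1:
  fixes a b :: nat
  assumes "a > 0" and "b > 0"
  shows "tileable (aztec_rectangle a b) {} \<longleftrightarrow> (a * (b + 1) + b * (a + 1)) mod 3 = 0"
proof
  assume "tileable (aztec_rectangle a b) {}"
  then have "3 dvd card (aztec_rectangle a b)"
    by (rule tileable_imp_3_dvd_card[OF finite_aztec_rectangle])
  then show "(a * (b + 1) + b * (a + 1)) mod 3 = 0"
    by (simp add: card_aztec_rectangle)
next
  assume "(a * (b + 1) + b * (a + 1)) mod 3 = 0"
  then consider "a mod 3 = 0" "b mod 3 = 0" | "a mod 3 = 2" "b mod 3 = 2"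
    unfolding aztec_area_mod_3 by auto
  then show "tileable (aztec_rectangle a b) {}"
  proof cases
    case 1
    with assms have "a = 3 + 3 * (a div 3 - 1)" "b = 3 + 3 * (b div 3 - 1)" by presburger+
    then show ?thesis
      using tileable_aztec_rectangle_add_mult_3[OF _ _ tileable_aztec_rectangle_3_3,
          of "a div 3 - 1" "b div 3 - 1"]
      by simp
  next
    case 2
    then have "a = 2 + 3 * (a div 3)" "b = 2 + 3 * (b div 3)" by presburger+
    then show ?thesis
      using tileable_aztec_rectangle_add_mult_3[OF _ _ tileable_aztec_rectangle_2_2,
          of "a div 3" "b div 3"]
      by simp
  qed
qed

end
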